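(* Let $k\ge 2$, and let $p,q$ be real polynomials with $\deg p=k$, $\deg q=k-1$, whose roots are real, simple and strictly interlacing, with roots of $p$ denoted $p_1<\dots<p_k$. Let $r>0$ and $\varphi\in(-\pi,\pi]$. Then all solutions $z\in\mathbb{C}$ of $\frac{q(z)}{p(z)}=re^{i\varphi}$, except at most one, lie in the closed disk $\{z:|z-\frac{p_1+p_k}{2}|\le\frac{p_k-p_1}{2}\}$. *)

theory Defs
  imports "HOL-Analysis.Analysis" "HOL-Computational_Algebra.Polynomial"
begin

end

theory Submission
  imports Defs
begin

(* Algebra: by Lagrange interpolation at the roots of p, q/p has the partial fraction
   expansion (lead q / lead p) * sum_i B_i / (z - p_i), and interlacing forces every residue
   B_i to be positive.

   Geometry: let F(z) = sum_i B_i / (z - x_i) with B_i > 0 and x_i in [a, b].  For z, w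
   outside the closed disk D with diameter [a, b], F(z) - F(w) = (w - z) * S with
   S = sum_i B_i / ((z - x_i)(w - x_i)).  Since z sees [a, b] under an acute angle, one
   rotation-and-scaling maps all z - x_i into the sector |arg| < pi/4, and likewise for w;
   hence after one common such map all summands of S have positive real part, so S ~= 0.
   Thus F is injective outside D, and so is q/p: at most one solution lies outside D. *)

lemma map_poly_of_real_mult:
  "map_poly (of_real :: real \<Rightarrow> 'a::{real_algebra_1,comm_ring_1}) (p * q)
     = map_poly of_real p * map_poly of_real q"
  by (rule poly_eqI) (simp add: coeff_map_poly coeff_mult)

lemma map_poly_of_real_prod:
  "map_poly (of_real :: real \<Rightarrow> 'a::{real_algebra_1,comm_ring_1}) (\<Prod>i\<in>A. f i)
     = (\<Prod>i\<in>A. map_poly of_real (f i))"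
  by (induction A rule: infinite_finite_induct) (simp_all add: map_poly_of_real_mult)

lemma poly_of_real_factored:
  fixes p :: "real poly"
  assumes "p = smult c (\<Prod>i\<in>A. [:- x i, 1:])"
  shows "poly (map_poly (of_real :: real \<Rightarrow> 'a::{real_algebra_1,comm_ring_1}) p) z
           = of_real c * (\<Prod>i\<in>A. z - of_real (x i))"
  by (simp add: assms map_poly_smult map_poly_of_real_prod poly_prod map_poly_pCons)

(* It is proved by comparing both sides at the card A nodes. *)
lemma lagrange_interpolation:
  fixes Q :: "'a::field poly" and x :: "'b \<Rightarrow> 'a"
  assumes A: "finite A" and inj: "inj_on x A" and deg: "degree Q < card A"
  shows "poly Q z = (\<Sum>i\<in>A. poly Q (x i) / (\<Prod>j\<in>A-{i}. x i - x j) * (\<Prod>j\<in>A-{i}. z - x j))"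
proof -
  define c where "c i = poly Q (x i) / (\<Prod>j\<in>A-{i}. x i - x j)" for i
  define L where "L = (\<Sum>i\<in>A. smult (c i) (\<Prod>j\<in>A-{i}. [:- x j, 1:]))"
  have eval_L: "poly L y = (\<Sum>i\<in>A. c i * (\<Prod>j\<in>A-{i}. y - x j))" for y
    by (simp add: L_def poly_sum poly_prod)
  have "degree L \<le> card A - 1"
    unfolding L_def
  proof (intro degree_sum_le order.trans[OF degree_smult_le])
    fix i assume "i \<in> A"
    have "degree (\<Prod>j\<in>A-{i}. [:- x j, 1:]) \<le> card (A - {i})"
      using degree_prod_sum_le[of "A - {i}" "\<lambda>j. [:- x j, 1:]"] A by (simp add: o_def)
    with \<open>i \<in> A\<close> A show "degree (\<Prod>j\<in>A-{i}. [:- x j, 1:]) \<le> card A - 1" by simp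
  qed (simp add: A)
  then have deg_L: "degree L < card A" using deg by linarith
  have nodes: "poly L (x i) = poly Q (x i)" if i: "i \<in> A" for i
  proof -
    have vanish: "(\<Prod>j\<in>A-{l}. x i - x j) = 0" if "l \<in> A - {i}" for l
      using that i A by (intro prod_zero) auto
    have nonzero: "(\<Prod>j\<in>A-{i}. x i - x j) \<noteq> 0"
      using inj i A by (auto simp: prod_zero_iff inj_on_eq_iff)
    have "poly L (x i) = c i * (\<Prod>j\<in>A-{i}. x i - x j)
        + (\<Sum>l\<in>A-{i}. c l * (\<Prod>j\<in>A-{l}. x i - x j))"
      unfolding eval_L using A i by (rule sum.remove)
    also have "(\<Sum>l\<in>A-{i}. c l * (\<Prod>j\<in>A-{l}. x i - x j)) = 0"
      using vanish by simp
    finally show ?thesis using nonzero by (simp add: c_def)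
  qed
  have "card (x ` A) = card A" using inj by (rule card_image)
  then have "Q = L"
    using deg deg_L by (intro poly_eqI_degree[of "x ` A"]) (auto simp: nodes)
  then have "poly Q z = poly L z" by simp
  then show ?thesis by (simp add: eval_L c_def)
qed

lemma partial_fractions:
  fixes Q :: "'a::field poly" and x :: "'b \<Rightarrow> 'a"
  assumes A: "finite A" and inj: "inj_on x A" and deg: "degree Q < card A"
    and not_pole: "(\<Prod>j\<in>A. z - x j) \<noteq> 0"
  shows "poly Q z / (\<Prod>j\<in>A. z - x j)
           = (\<Sum>i\<in>A. (poly Q (x i) / (\<Prod>j\<in>A-{i}. x i - x j)) / (z - x i))"
proof -
  have split: "(\<Prod>j\<in>A. z - x j) = (z - x i) * (\<Prod>j\<in>A-{i}. z - x j)" if "i \<in> A" for i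
    using A that by (rule prod.remove)
  have "poly Q z / (\<Prod>j\<in>A. z - x j)
      = (\<Sum>i\<in>A. poly Q (x i) / (\<Prod>j\<in>A-{i}. x i - x j) * (\<Prod>j\<in>A-{i}. z - x j)
                       / (\<Prod>j\<in>A. z - x j))"
    by (subst lagrange_interpolation[OF A inj deg]) (simp add: sum_divide_distrib)
  also have "\<dots> = (\<Sum>i\<in>A. (poly Q (x i) / (\<Prod>j\<in>A-{i}. x i - x j)) / (z - x i))"
  proof (rule sum.cong[OF refl])
    fix i assume "i \<in> A"
    then show "poly Q (x i) / (\<Prod>j\<in>A-{i}. x i - x j) * (\<Prod>j\<in>A-{i}. z - x j)
                 / (\<Prod>j\<in>A. z - x j) = (poly Q (x i) / (\<Prod>j\<in>A-{i}. x i - x j)) / (z - x i)"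
      using not_pole split[of i] by simp
  qed
  finally show ?thesis .
qed

(* The residue at p_i of the quotient of the monic polynomials with roots q_1..q_(k-1) and
   p_1..p_k. *)
definition interlacing_residue :: "nat \<Rightarrow> (nat \<Rightarrow> real) \<Rightarrow> (nat \<Rightarrow> real) \<Rightarrow> nat \<Rightarrow> real" where
  "interlacing_residue k ps qs i = (\<Prod>j\<in>{1..k-1}. ps i - qs j) / (\<Prod>j\<in>{1..k}-{i}. ps i - ps j)"

(* Interlacing makes every residue positive: pairing q_j with p_j (for j < i) or with
   p_(j+1) (for j >= i), each quotient (p_i - q_j) / (p_i - p_(paired)) is positive. *)
lemma interlacing_residue_pos:
  fixes ps qs :: "nat \<Rightarrow> real"
  assumes mono: "strict_mono_on {1..k} ps"
    and interlace: "\<And>j. 1 \<le> j \<Longrightarrow> j \<le> k - 1 \<Longrightarrow> ps j < qs j \<and> qs j < ps (j + 1)"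
    and i: "i \<in> {1..k}"
  shows "interlacing_residue k ps qs i > 0"
proof -
  have less: "ps a < ps b" if "a \<in> {1..k}" "b \<in> {1..k}" "a < b" for a b
    using mono that by (rule strict_mono_onD)
  have le: "ps a \<le> ps b" if "a \<in> {1..k}" "b \<in> {1..k}" "a \<le> b" for a b
    using less[of a b] that by (cases "a < b") auto
  define \<sigma> where "\<sigma> j = (if j < i then j else Suc j)" for j
  have "(\<Prod>j\<in>{1..k-1}. ps i - ps (\<sigma> j)) = (\<Prod>j\<in>{1..k}-{i}. ps i - ps j)"
    unfolding \<sigma>_def
    by (rule prod.reindex_bij_witness[where i="\<lambda>j. if j < i then j else j - 1"
                                         and j="\<lambda>j. if j < i then j else Suc j"])
       (use i in auto)
  then have "(\<Prod>j\<in>{1..k-1}. ps i - qs j) / (\<Prod>j\<in>{1..k}-{i}. ps i - ps j)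
      = (\<Prod>j\<in>{1..k-1}. (ps i - qs j) / (ps i - ps (\<sigma> j)))"
    by (simp add: prod_dividef)
  also have "\<dots> > 0"
  proof (rule prod_pos)
    fix j assume j: "j \<in> {1..k-1}"
    have qj: "ps j < qs j" "qs j < ps (j + 1)" using interlace[of j] j by auto
    show "(ps i - qs j) / (ps i - ps (\<sigma> j)) > 0"
    proof (cases "j < i")
      case True
      then have "ps (j + 1) \<le> ps i" "ps j < ps i" using le[of "j + 1" i] less[of j i] i j by auto
      then show ?thesis using qj True by (simp add: \<sigma>_def)
    next
      case False
      then have "ps i \<le> ps j" "ps i < ps (Suc j)" using le[of i j] less[of i "Suc j"] i j by auto
      then show ?thesis using qj False by (simp add: \<sigma>_def divide_neg_neg)
    qed
  qed
  finally show ?thesis unfolding interlacing_residue_def .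
qed

lemma interlacing_partial_fractions:
  fixes ps qs :: "nat \<Rightarrow> real" and z :: complex
  assumes "k \<ge> 1" and mono: "strict_mono_on {1..k} ps"
    and not_pole: "(\<Prod>i=1..k. z - of_real (ps i)) \<noteq> 0"
  shows "(\<Prod>j=1..k-1. z - of_real (qs j)) / (\<Prod>i=1..k. z - of_real (ps i))
           = (\<Sum>i=1..k. of_real (interlacing_residue k ps qs i) / (z - of_real (ps i)))"
proof -
  define Q :: "complex poly" where "Q = (\<Prod>j=1..k-1. [:- of_real (qs j), 1:])"
  have eval_Q: "poly Q y = (\<Prod>j=1..k-1. y - of_real (qs j))" for y
    by (simp add: Q_def poly_prod)
  have "inj_on ps {1..k}" using mono by (rule strict_mono_on_imp_inj_on)
  then have inj: "inj_on (\<lambda>i. complex_of_real (ps i)) {1..k}"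
    by (metis (mono_tags, lifting) inj_on_def of_real_eq_iff)
  have "degree Q \<le> k - 1"
    using degree_prod_sum_le[of "{1..k-1}" "\<lambda>j. [:- complex_of_real (qs j), 1:]"]
    by (simp add: Q_def o_def)
  then have deg: "degree Q < card {1..k}" using assms(1) by simp
  have residue: "(\<Prod>j=1..k-1. of_real (ps i) - of_real (qs j))
                   / (\<Prod>j\<in>{1..k}-{i}. of_real (ps i) - of_real (ps j))
                   = complex_of_real (interlacing_residue k ps qs i)" for i
    by (simp add: interlacing_residue_def of_real_prod)
  have "poly Q z / (\<Prod>i=1..k. z - of_real (ps i))
      = (\<Sum>i=1..k. (poly Q (of_real (ps i)) / (\<Prod>j\<in>{1..k}-{i}. of_real (ps i) - of_real (ps j)))
                      / (z - of_real (ps i)))"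
    using not_pole by (intro partial_fractions[OF _ inj deg]) simp_all
  then show ?thesis by (simp only: eval_Q residue)
qed

(* The open sector |arg a| < pi/4.  Products of two of its elements have positive real
   part, and it is convex; these two facts drive the injectivity argument. *)
definition in_sector :: "complex \<Rightarrow> bool" where
  "in_sector a \<longleftrightarrow> \<bar>Im a\<bar> < Re a"

lemma in_sector_convex:
  assumes "in_sector a" "in_sector b" "0 \<le> l" "l \<le> 1"
  shows "in_sector (of_real l * a + of_real (1 - l) * b)"
proof -
  have "\<bar>l * Im a + (1 - l) * Im b\<bar> \<le> l * \<bar>Im a\<bar> + (1 - l) * \<bar>Im b\<bar>"
    using assms by (simp add: abs_mult abs_triangle_ineq[THEN order_trans])
  also have "\<dots> < l * Re a + (1 - l) * Re b"
  proof (cases "l = 0")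
    case True
    then show ?thesis using assms by (simp add: in_sector_def)
  next
    case False
    then have "l * \<bar>Im a\<bar> < l * Re a" using assms by (simp add: in_sector_def)
    moreover have "(1 - l) * \<bar>Im b\<bar> \<le> (1 - l) * Re b"
      using assms by (intro mult_left_mono) (auto simp: in_sector_def)
    ultimately show ?thesis by linarith
  qed
  finally show ?thesis by (simp add: in_sector_def)
qed

lemma in_sector_mult_Re_pos:
  assumes "in_sector a" "in_sector b"
  shows "Re (a * b) > 0"
proof -
  have "Im a * Im b \<le> \<bar>Im a\<bar> * \<bar>Im b\<bar>"
    by (simp add: abs_mult[symmetric])
  also have "\<dots> < Re a * Re b"
    using assms unfolding in_sector_def by (intro mult_strict_mono) auto
  finally show ?thesis by simp
qed

(* If the angle between a and b is acute, rotating by the (conjugate) bisecting direction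
   e puts both a and b into the sector. *)
lemma in_sector_bisector:
  assumes "a \<noteq> 0" "b \<noteq> 0" "Re (a * cnj b) > 0"
  defines "e \<equiv> a / of_real (cmod a) + b / of_real (cmod b)"
  shows "in_sector (cnj e * a)" "in_sector (cnj e * b)"
proof -
  have pos: "cmod a > 0" "cmod b > 0" using assms by auto
  have ea: "cnj e * a = of_real (cmod a) + (cnj b * a) / of_real (cmod b)"
    using assms(1) unfolding e_def
    by (simp add: field_simps complex_norm_square[symmetric] power2_eq_square)
  have eb: "cnj e * b = of_real (cmod b) + (cnj a * b) / of_real (cmod a)"
    using assms(2) unfolding e_def
    by (simp add: field_simps complex_norm_square[symmetric] power2_eq_square)
  have "\<bar>Im (cnj b * a)\<bar> \<le> cmod a * cmod b"
    using abs_Im_le_cmod[of "cnj b * a"] by (simp add: norm_mult mult.commute)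
  then have "\<bar>Im (cnj b * a)\<bar> / cmod b \<le> cmod a" using pos by (simp add: divide_le_eq)
  moreover have "Re (cnj b * a) / cmod b > 0" using assms(3) pos by (simp add: mult.commute)
  ultimately show "in_sector (cnj e * a)" unfolding ea in_sector_def
    by (simp add: Re_divide_of_real Im_divide_of_real abs_div)
  have "\<bar>Im (cnj a * b)\<bar> \<le> cmod a * cmod b"
    using abs_Im_le_cmod[of "cnj a * b"] by (simp add: norm_mult)
  then have "\<bar>Im (cnj a * b)\<bar> / cmod a \<le> cmod b"
    using pos by (simp add: divide_le_eq mult.commute)
  moreover have "Re (cnj a * b) / cmod a > 0" using assms(3) pos by (simp add: algebra_simps)
  ultimately show "in_sector (cnj e * b)" unfolding eb in_sector_def
    by (simp add: Re_divide_of_real Im_divide_of_real abs_div)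
qed

(* A point z outside the closed disk with diameter [a, b] sees this segment under an acute
   angle (Thales), so after multiplication by one fixed number all vectors z - t,
   t in [a, b], lie in the sector. *)
lemma outside_disk_sector:
  fixes z :: complex and a b :: real
  assumes "a < b" and outside: "cmod (z - of_real ((a + b) / 2)) > (b - a) / 2"
  obtains e where "\<And>t. t \<in> {a..b} \<Longrightarrow> in_sector (cnj e * (z - of_real t))"
proof -
  define u where "u = z - of_real a"
  define v where "v = z - of_real b"
  have "(cmod (z - of_real ((a + b) / 2)))\<^sup>2 > ((b - a) / 2)\<^sup>2"
    using outside assms(1) by (intro power_strict_mono) auto
  moreover have "Re (u * cnj v) = (cmod (z - of_real ((a + b) / 2)))\<^sup>2 - ((b - a) / 2)\<^sup>2"
    unfolding u_def v_def cmod_power2 by (simp add: power2_eq_square field_simps)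
  ultimately have acute: "Re (u * cnj v) > 0" by linarith
  then have "u \<noteq> 0" "v \<noteq> 0" by auto
  define e where "e = u / of_real (cmod u) + v / of_real (cmod v)"
  have su: "in_sector (cnj e * u)" and sv: "in_sector (cnj e * v)"
    using in_sector_bisector[OF \<open>u \<noteq> 0\<close> \<open>v \<noteq> 0\<close> acute] unfolding e_def by auto
  show ?thesis
  proof
    fix t assume t: "t \<in> {a..b}"
    define l where "l = (b - t) / (b - a)"
    have l: "0 \<le> l" "l \<le> 1" using t assms(1) by (auto simp: l_def field_simps)
    have "l * (b - a) = b - t" using assms(1) by (simp add: l_def)
    then have "t = l * a + (1 - l) * b" by (simp add: algebra_simps)
    moreover have "of_real l * u + of_real (1 - l) * v = z - of_real (l * a + (1 - l) * b)"
      unfolding u_def v_def by (simp add: algebra_simps)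
    ultimately have "z - of_real t = of_real l * u + of_real (1 - l) * v" by simp
    then have "cnj e * (z - of_real t) = cnj e * (of_real l * u + of_real (1 - l) * v)" by simp
    also have "\<dots> = of_real l * (cnj e * u) + of_real (1 - l) * (cnj e * v)"
      by (simp add: algebra_simps)
    finally show "in_sector (cnj e * (z - of_real t))"
      using in_sector_convex[OF su sv l] by simp
  qed
qed

lemma Re_divide_pos_of_cnj_mult:
  fixes u X :: complex
  assumes "Re (cnj u * X) > 0"
  shows "Re (u / X) > 0"
proof -
  have "X \<noteq> 0" using assms by auto
  then have "(Re X)\<^sup>2 + (Im X)\<^sup>2 > 0" by (simp flip: cmod_power2)
  moreover have "Re u * Re X + Im u * Im X > 0" using assms by simp
  ultimately show ?thesis by (simp add: Re_divide)
qed

(* Key estimate: for z, w outside the disk and nodes in [a, b], the positively weighted sum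
   of 1 / ((z - x i)(w - x i)) cannot vanish, since after multiplying by one fixed number
   e * f every summand has positive real part. *)
lemma weighted_sum_outside_disk_nonzero:
  fixes z w :: complex and a b :: real and B x :: "'i \<Rightarrow> real"
  assumes "a < b"
    and "cmod (z - of_real ((a + b) / 2)) > (b - a) / 2"
    and "cmod (w - of_real ((a + b) / 2)) > (b - a) / 2"
    and "finite I" "I \<noteq> {}"
    and B_pos: "\<And>i. i \<in> I \<Longrightarrow> B i > 0" and nodes: "\<And>i. i \<in> I \<Longrightarrow> x i \<in> {a..b}"
  shows "(\<Sum>i\<in>I. of_real (B i) / ((z - of_real (x i)) * (w - of_real (x i)))) \<noteq> 0"
proof -
  obtain e where e: "\<And>t. t \<in> {a..b} \<Longrightarrow> in_sector (cnj e * (z - of_real t))"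
    using outside_disk_sector[OF assms(1,2)] by blast
  obtain f where f: "\<And>t. t \<in> {a..b} \<Longrightarrow> in_sector (cnj f * (w - of_real t))"
    using outside_disk_sector[OF assms(1,3)] by blast
  have term_pos: "Re (e * f * (of_real (B i) / ((z - of_real (x i)) * (w - of_real (x i))))) > 0"
    if i: "i \<in> I" for i
  proof -
    have "Re ((cnj e * (z - of_real (x i))) * (cnj f * (w - of_real (x i)))) > 0"
      using in_sector_mult_Re_pos[OF e f] nodes[OF i] by blast
    then have "Re (cnj (e * f) * ((z - of_real (x i)) * (w - of_real (x i)))) > 0"
      by (simp add: algebra_simps)
    then have "Re (e * f / ((z - of_real (x i)) * (w - of_real (x i)))) > 0"
      by (rule Re_divide_pos_of_cnj_mult)
    moreover have "e * f * (of_real (B i) / ((z - of_real (x i)) * (w - of_real (x i))))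
        = of_real (B i) * (e * f / ((z - of_real (x i)) * (w - of_real (x i))))" by simp
    moreover have "Re (of_real c * y) > 0" if "c > 0" "Re y > 0" for c y
      using that by simp
    ultimately show ?thesis using B_pos[OF i] by metis
  qed
  have "Re (e * f * (\<Sum>i\<in>I. of_real (B i) / ((z - of_real (x i)) * (w - of_real (x i))))) > 0"
    unfolding sum_distrib_left Re_sum using term_pos assms(4,5) by (intro sum_pos) auto
  then show ?thesis by (intro notI) simp
qed

(* Consequently a sum of simple fractions with positive residues at points of [a, b] is
   injective outside the disk with diameter [a, b]: the difference of its values at z and w
   equals (w - z) times the nonvanishing sum above. *)
lemma positive_partial_fraction_inj_outside_disk:
  fixes z w :: complex and a b :: real and B x :: "'i \<Rightarrow> real"
  assumes "a < b"
    and z: "cmod (z - of_real ((a + b) / 2)) > (b - a) / 2"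
    and w: "cmod (w - of_real ((a + b) / 2)) > (b - a) / 2"
    and "finite I" "I \<noteq> {}"
    and "\<And>i. i \<in> I \<Longrightarrow> B i > 0" and nodes: "\<And>i. i \<in> I \<Longrightarrow> x i \<in> {a..b}"
    and same_value: "(\<Sum>i\<in>I. of_real (B i) / (z - of_real (x i)))
                       = (\<Sum>i\<in>I. of_real (B i) / (w - of_real (x i)))"
  shows "z = w"
proof (rule ccontr)
  assume "z \<noteq> w"
  have in_disk: "cmod (of_real t - of_real ((a + b) / 2)) \<le> (b - a) / 2" if "t \<in> {a..b}" for t
  proof -
    have "cmod (of_real t - of_real ((a + b) / 2)) = \<bar>t - (a + b) / 2\<bar>"
      by (simp only: norm_of_real flip: of_real_diff)
    moreover from that have "a \<le> t" "t \<le> b" by auto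
    then have "\<bar>t - (a + b) / 2\<bar> \<le> (b - a) / 2" by (simp add: abs_le_iff field_simps)
    ultimately show ?thesis by simp
  qed
  have off_nodes: "z - of_real (x i) \<noteq> 0" "w - of_real (x i) \<noteq> 0" if "i \<in> I" for i
    using in_disk[OF nodes[OF that]] z w by auto
  have "0 = (\<Sum>i\<in>I. of_real (B i) / (z - of_real (x i)) - of_real (B i) / (w - of_real (x i)))"
    using same_value by (simp add: sum_subtractf)
  also have "\<dots> = (w - z) * (\<Sum>i\<in>I. of_real (B i) / ((z - of_real (x i)) * (w - of_real (x i))))"
    unfolding sum_distrib_left using off_nodes by (intro sum.cong) (auto simp: field_simps)
  finally show False
    using \<open>z \<noteq> w\<close> weighted_sum_outside_disk_nonzero[OF assms(1-7)] by simp
qed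

lemma interlacing_quotient_expansion:
  fixes p q :: "real poly" and ps qs :: "nat \<Rightarrow> real" and z :: complex
  assumes "k \<ge> 1"
    and p: "p = smult cp (\<Prod>i=1..k. [:- ps i, 1:])"
    and q: "q = smult cq (\<Prod>i=1..k-1. [:- qs i, 1:])"
    and mono: "strict_mono_on {1..k} ps"
    and not_pole: "poly (map_poly complex_of_real p) z \<noteq> 0"
  shows "poly (map_poly complex_of_real q) z / poly (map_poly complex_of_real p) z
           = of_real (cq / cp) * (\<Sum>i=1..k. of_real (interlacing_residue k ps qs i) / (z - of_real (ps i)))"
proof -
  let ?P = "\<Prod>i=1..k. z - of_real (ps i)" and ?Q = "\<Prod>i=1..k-1. z - of_real (qs i)"
  have p_eval: "poly (map_poly complex_of_real p) z = of_real cp * ?P"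
    using p by (rule poly_of_real_factored)
  have q_eval: "poly (map_poly complex_of_real q) z = of_real cq * ?Q"
    using q by (rule poly_of_real_factored)
  have "?P \<noteq> 0" using not_pole p_eval by auto
  have "poly (map_poly complex_of_real q) z / poly (map_poly complex_of_real p) z
      = of_real (cq / cp) * (?Q / ?P)"
    by (simp add: p_eval q_eval)
  also have "?Q / ?P = (\<Sum>i=1..k. of_real (interlacing_residue k ps qs i) / (z - of_real (ps i)))"
    using interlacing_partial_fractions[OF assms(1) mono \<open>?P \<noteq> 0\<close>] by simp
  finally show ?thesis .
qed

(* The theorem: q/p is a nonzero real multiple of the interlacing partial fraction sum,
   which is injective outside the disk with diameter [p_1, p_k]; so at most one solution of
   q/p = r e^(i phi) lies outside that disk. *)
theorem corollary2:
  fixes p q :: "real poly" and k :: nat and ps qs :: "nat \<Rightarrow> real"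
    and r \<phi> :: real
  assumes "k \<ge> 2"
    and "degree p = k" and "degree q = k - 1"
    and "p = smult (lead_coeff p) (\<Prod>i=1..k. [:- ps i, 1:])"
    and "q = smult (lead_coeff q) (\<Prod>i=1..k-1. [:- qs i, 1:])"
    and "strict_mono_on {1..k} ps"
    and "\<And>i. 1 \<le> i \<Longrightarrow> i \<le> k - 1 \<Longrightarrow> ps i < qs i \<and> qs i < ps (i + 1)"
    and "r > 0" and "- pi < \<phi>" and "\<phi> \<le> pi"
  shows "\<forall>z w. (poly (map_poly complex_of_real p) z \<noteq> 0 \<and>
                  poly (map_poly complex_of_real q) z / poly (map_poly complex_of_real p) z
                    = complex_of_real r * exp (\<i> * complex_of_real \<phi>) \<and>
                  cmod (z - complex_of_real ((ps 1 + ps k) / 2)) > (ps k - ps 1) / 2) \<and>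
                 (poly (map_poly complex_of_real p) w \<noteq> 0 \<and>
                  poly (map_poly complex_of_real q) w / poly (map_poly complex_of_real p) w
                    = complex_of_real r * exp (\<i> * complex_of_real \<phi>) \<and>
                  cmod (w - complex_of_real ((ps 1 + ps k) / 2)) > (ps k - ps 1) / 2)
                 \<longrightarrow> z = w"
proof -
  let ?R = "\<lambda>z. poly (map_poly complex_of_real q) z / poly (map_poly complex_of_real p) z"
  let ?F = "\<lambda>z. \<Sum>i=1..k. of_real (interlacing_residue k ps qs i) / (z - of_real (ps i))"
  let ?outside = "\<lambda>z. cmod (z - complex_of_real ((ps 1 + ps k) / 2)) > (ps k - ps 1) / 2"
  have "degree p \<noteq> 0" "degree q \<noteq> 0" using assms(1-3) by auto
  then have lc: "lead_coeff q / lead_coeff p \<noteq> 0" by auto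
  have expansion: "?R z = of_real (lead_coeff q / lead_coeff p) * ?F z"
    if "poly (map_poly complex_of_real p) z \<noteq> 0" for z
    using assms(1) by (intro interlacing_quotient_expansion[OF _ assms(4-6) that]) simp
  have nodes: "ps i \<in> {ps 1..ps k}" if "i \<in> {1..k}" for i
    using that strict_mono_on_imp_mono_on[OF assms(6)] by (auto intro: mono_onD)
  have "ps 1 < ps k" using assms(1,6) by (auto intro: strict_mono_onD)
  have unique: "z = w"
    if "poly (map_poly complex_of_real p) z \<noteq> 0" "poly (map_poly complex_of_real p) w \<noteq> 0"
      and "?R z = ?R w" and "?outside z" "?outside w" for z w
  proof (rule positive_partial_fraction_inj_outside_disk[OF \<open>ps 1 < ps k\<close> that(4,5)])
    show "?F z = ?F w" using that(3) expansion[OF that(1)] expansion[OF that(2)] lc by simp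
  qed (use nodes interlacing_residue_pos[OF assms(6,7)] assms(1) in auto)
  show ?thesis using unique by auto
qed

end
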